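(* Let $n\in\mathbb N$ and $x_0\le x_1\le\dots\le x_n$ real numbers. For $j=1,\dots,n$ let $\widehat f_j\in C^\infty([x_{j-1},x_j])$ ($\mathbb F$-valued). Assume that $\widehat f_i^{(k)}(x_i)=\widehat f_{i+1}^{(k)}(x_i)$ for all $0\le k\le i-1$ and all $i\in\{1,\dots,n-1\}$. Then for every $\delta>0$ there exists $F\in C^{n-1}([x_0,x_n])$ such that for all $k=0,\dots,n-1$, $$|F^{(k)}(x)-\widehat f_j^{(k)}(x)|<\delta\quad\text{for all }x\in[x_{j-1},x_j]\text{ and all }j\in\{k+1,\dots,n\}.$$
   Context: $\mathbb F\in\{\mathbb R,\mathbb C\}$. Convention for possibly degenerate intervals: for $\alpha<\beta$, $C^m([\alpha,\beta])$ (resp. $C^\infty([\alpha,\beta])$) is the space of $m$-times continuously (resp. infinitely) differentiable functions on $[\alpha,\beta]$ with one-sided derivatives at the endpoints. For a degenerate interval $\{\alpha\}$, $C^m(\{\alpha\})$ is identified with $\mathbb F^{m+1}$ and $C^\infty(\{\alpha\})$ with the space of sequences $(a_k)_{k\ge0}\subset\mathbb F$, with the notation $f^{(k)}(\alpha)=a_k$. *)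

theory Defs
  imports "HOL-Analysis.Analysis"
begin

text \<open>A function of class C^m on a possibly degenerate interval [a,b] is represented by
  its derivative data: f k is the k-th derivative (k \<le> m).  For a degenerate interval a = b, the data f k a (k \<le> m) are arbitrary
  scalars, matching the identification C^m({a}) = F^(m+1).\<close>

definition Cm_on :: "nat \<Rightarrow> real \<Rightarrow> real \<Rightarrow> (nat \<Rightarrow> real \<Rightarrow> 'a::real_normed_vector) \<Rightarrow> bool" where
  "Cm_on m a b f \<longleftrightarrow>
     (a < b \<longrightarrow>
        (\<forall>k\<le>m. continuous_on {a..b} (f k)) \<and>
        (\<forall>k<m. \<forall>t\<in>{a..b}. (f k has_vector_derivative f (Suc k) t) (at t within {a..b})))"

definition Cinf_on :: "real \<Rightarrow> real \<Rightarrow> (nat \<Rightarrow> real \<Rightarrow> 'a::real_normed_vector) \<Rightarrow> bool" where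
  "Cinf_on a b f \<longleftrightarrow> (\<forall>m. Cm_on m a b f)"

end

theory Submission
  imports Defs
begin

text \<open>
  Induct on the number of pieces, splitting off the leftmost one, with the matching hypothesis
  strengthened by an extra order \<open>s\<close>. The induction hypothesis, applied to the pieces
  \<open>2, \<dots>, n\<close> with \<open>s + 1\<close>, gives a function \<open>G\<close> whose jet at \<open>x\<^sub>1\<close> agrees with that of
  \<open>f\<^sub>1\<close> only up to order \<open>s\<close>. On \<open>[x\<^sub>0, x\<^sub>1]\<close> we therefore add to \<open>f\<^sub>1\<close> multiples of bump
  functions \<open>\<phi>\<^sub>m\<close> (\<open>m > s\<close>) whose jet at \<open>x\<^sub>1\<close> is the \<open>m\<close>-th unit vector, whose jet at
  \<open>x\<^sub>0\<close> vanishes, and whose derivatives of order \<open>< m\<close> are uniformly small; the result can be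
  glued to \<open>G\<close> and stays \<open>\<delta>\<close>-close to \<open>f\<^sub>1\<close> up to order \<open>s\<close>. The bumps are polynomials
  rescaled to an interval of length \<open>\<eta>\<close>, which multiplies their \<open>k\<close>-th derivative by
  \<open>\<eta>\<^sup>m\<^sup>-\<^sup>k\<close>.
\<close>

lemma has_vector_derivative_bot:
  assumes "at t within S = bot"
  shows "(f has_vector_derivative f') (at t within S)"
  using assms by (simp add: has_vector_derivative_def bounded_linear_scaleR_left has_derivative_bot)

lemma has_vector_derivative_within_Un:
  assumes "(f has_vector_derivative f') (at t within S)"
    and "(f has_vector_derivative f') (at t within T)"
  shows "(f has_vector_derivative f') (at t within S \<union> T)"
  using assms unfolding has_vector_derivative_def has_derivative_at_within
  by (auto intro: Lim_Un)

text \<open>Both sides are trivially true when \<open>b \<le> a\<close>: then \<open>{a..b}\<close> is empty or \<open>{a}\<close>, and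
  \<open>at a within {a}\<close> is the trivial filter.\<close>

lemma Cm_on_iff:
  "Cm_on m a b f \<longleftrightarrow>
     (\<forall>k\<le>m. continuous_on {a..b} (f k)) \<and>
     (\<forall>k<m. \<forall>t\<in>{a..b}. (f k has_vector_derivative f (Suc k) t) (at t within {a..b}))"
proof (cases "a < b")
  case False
  then have "{a..b} = {} \<or> {a..b} = {a}" by auto
  then show ?thesis
    by (auto simp: Cm_on_def at_within_eq_bot_iff intro: has_vector_derivative_bot)
qed (simp add: Cm_on_def)

lemma Cm_on_cong:
  assumes "Cm_on m a b g" and "\<And>k t. k \<le> m \<Longrightarrow> t \<in> {a..b} \<Longrightarrow> f k t = g k t"
  shows "Cm_on m a b f"
  using assms unfolding Cm_on_iff
  by (auto intro: continuous_on_eq has_vector_derivative_transform)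

lemma Cm_on_glue:
  assumes "a \<le> b" "b \<le> c" and f: "Cm_on m a b f" and g: "Cm_on m b c g"
    and match: "\<And>k. k \<le> m \<Longrightarrow> f k b = g k b"
  shows "Cm_on m a c (\<lambda>k t. if t \<le> b then f k t else g k t)"
proof -
  let ?h = "\<lambda>k t. if t \<le> b then f k t else g k t"
  have interval_split: "{a..c} = {a..b} \<union> {b..c}" using assms(1,2) by auto
  have left: "Cm_on m a b ?h" by (rule Cm_on_cong[OF f]) auto
  have right: "Cm_on m b c ?h" by (rule Cm_on_cong[OF g]) (use match in auto)
  show ?thesis
    unfolding Cm_on_iff
  proof (intro conjI allI impI ballI)
    fix k assume "k \<le> m"
    then show "continuous_on {a..c} (?h k)"
      unfolding interval_split using left right unfolding Cm_on_iff
      by (intro continuous_on_closed_Un) auto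
  next
    fix k t assume "k < m" "t \<in> {a..c}"
    have "(?h k has_vector_derivative ?h (Suc k) t) (at t within S)"
      if "Cm_on m u v ?h" "S = {u..v}" for u v S
    proof (cases "t \<in> S")
      case True
      then show ?thesis using that \<open>k < m\<close> unfolding Cm_on_iff by blast
    next
      case False
      then show ?thesis
        using that by (intro has_vector_derivative_bot) (simp add: at_within_eq_bot_iff)
    qed
    from this[OF left refl] this[OF right refl]
    show "(?h k has_vector_derivative ?h (Suc k) t) (at t within {a..c})"
      unfolding interval_split by (rule has_vector_derivative_within_Un)
  qed
qed

lemma Cm_on_zero: "Cm_on m a b (\<lambda>k t. 0)"
  unfolding Cm_on_iff by (simp add: has_vector_derivative_const)

lemma Cm_on_add:
  assumes "Cm_on m a b f" "Cm_on m a b g"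
  shows "Cm_on m a b (\<lambda>k t. f k t + g k t)"
  using assms unfolding Cm_on_iff by (auto intro: continuous_on_add has_vector_derivative_add)

lemma Cm_on_sum:
  assumes "\<And>i. i \<in> I \<Longrightarrow> Cm_on m a b (f i)"
  shows "Cm_on m a b (\<lambda>k t. \<Sum>i\<in>I. f i k t)"
  using assms
proof (induction I rule: infinite_finite_induct)
  case (insert i I)
  then show ?case by (simp add: Cm_on_add)
qed (simp_all add: Cm_on_zero)

lemma Cm_on_scaleR_const:
  assumes "Cm_on m a b \<phi>"
  shows "Cm_on m a b (\<lambda>k t. \<phi> k t *\<^sub>R c)"
  unfolding Cm_on_iff
proof (intro conjI allI impI ballI)
  fix k assume "k \<le> m"
  then show "continuous_on {a..b} (\<lambda>t. \<phi> k t *\<^sub>R c)"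
    using assms unfolding Cm_on_iff by (intro continuous_on_scaleR continuous_on_const) auto
next
  fix k t assume "k < m" "t \<in> {a..b}"
  then have "(\<phi> k has_real_derivative \<phi> (Suc k) t) (at t within {a..b})"
    using assms unfolding Cm_on_iff has_real_derivative_iff_has_vector_derivative by blast
  then show "((\<lambda>t. \<phi> k t *\<^sub>R c) has_vector_derivative \<phi> (Suc k) t *\<^sub>R c) (at t within {a..b})"
    using has_vector_derivative_scaleR[OF _ has_vector_derivative_const] by fastforce
qed

lemma Cm_on_of_has_vector_derivative_at:
  assumes "\<And>k t. (f k has_vector_derivative f (Suc k) t) (at t)"
  shows "Cm_on m a b f"
  unfolding Cm_on_iff
  using assms by (metis has_vector_derivative_at_within has_vector_derivative_continuous
      continuous_at_imp_continuous_on)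

lemma poly_higher_pderiv_0:
  "poly ((pderiv ^^ k) p) 0 = fact k * coeff p k"
  by (simp add: poly_0_coeff_0 coeff_higher_pderiv pochhammer_fact)

lemma poly_higher_pderiv_multiple_root:
  fixes p :: "'a::idom poly"
  assumes "[:-c, 1:] ^ r dvd p" "k < r"
  shows "poly ((pderiv ^^ k) p) c = 0"
  using assms
proof (induction k arbitrary: p r)
  case 0
  then have "[:-c, 1:] dvd p"
    using dvd_power[of r "[:-c, 1:]"] dvd_trans by blast
  then show ?case by (simp add: poly_eq_0_iff_dvd)
next
  case (Suc k)
  then obtain r' where r: "r = Suc r'" by (cases r) auto
  with Suc.prems obtain q where p: "p = [:-c, 1:] ^ Suc r' * q" by (auto elim: dvdE)
  have "pderiv p = [:-c, 1:] ^ r' * (smult (of_nat (Suc r')) q + [:-c, 1:] * pderiv q)"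
    unfolding p pderiv_mult pderiv_power_Suc by (simp add: algebra_simps pderiv_pCons)
  then have "[:-c, 1:] ^ r' dvd pderiv p" by simp
  then show ?case
    using Suc.IH[of r' "pderiv p"] Suc.prems(2) r by (simp add: funpow_Suc_right del: funpow.simps)
qed

lemma diff_dvd_power_diff: "x - y dvd x ^ n - y ^ n"
  for x y :: "'a::comm_ring_1"
  by (simp add: power_diff_sumr2)

lemma exists_poly_with_jets:
  assumes "m \<le> M"
  obtains p :: "'a::field_char_0 poly"
  where "\<And>k. k \<le> M \<Longrightarrow> poly ((pderiv ^^ k) p) 0 = (if k = m then 1 else 0)"
    and "\<And>k. k \<le> M \<Longrightarrow> poly ((pderiv ^^ k) p) (-1) = 0"
proof -
  \<comment> \<open>\<open>g \<equiv> 1\<close> modulo \<open>X\<^sup>M\<^sup>+\<^sup>1\<close> and \<open>(1 + X)\<^sup>M\<^sup>+\<^sup>1\<close> divides \<open>g\<close>, so \<open>p = X\<^sup>m g / m!\<close> has the jet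
    of \<open>X\<^sup>m / m!\<close> at \<open>0\<close> and vanishes to order \<open>M + 1\<close> at \<open>-1\<close>.\<close>
  define X :: "'a poly" where "X = [:0, 1:]"
  define y where "y = (-X) ^ Suc M"
  define g where "g = (1 - y) ^ Suc M"
  define p where "p = smult (1 / fact m) (monom 1 m * g)"
  have "1 - (-X) = [:-(-1), 1:]" by (simp add: X_def one_pCons)
  then have "[:-(-1), 1:] dvd 1 - y"
    using diff_dvd_power_diff[of 1 "-X" "Suc M"] by (simp only: y_def power_one)
  then have "[:-(-1), 1:] ^ Suc M dvd p"
    unfolding p_def g_def by (intro dvd_smult dvd_mult dvd_power_same)
  then have root: "poly ((pderiv ^^ k) p) (-1) = 0" if "k \<le> M" for k
    using that poly_higher_pderiv_multiple_root by (metis less_Suc_eq_le)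
  have "(1 - y) - 1 dvd g - 1 ^ Suc M"
    unfolding g_def by (rule diff_dvd_power_diff)
  then have "y dvd g - 1" by simp
  then obtain q where q: "g - 1 = y * q" by (rule dvdE)
  have "-X = smult (-1) X" by simp
  then have "y = smult ((-1) ^ Suc M) (monom 1 (Suc M))"
    by (simp only: y_def smult_power monom_altdef X_def smult_1_left)
  with q have "g = 1 + monom 1 (Suc M) * smult ((-1) ^ Suc M) q"
    by (simp add: algebra_simps)
  then have "coeff g j = (if j = 0 then 1 else 0)" if "j \<le> M" for j
    using that by (simp add: coeff_monom_mult)
  then have "poly ((pderiv ^^ k) p) 0 = (if k = m then 1 else 0)" if "k \<le> M" for k
    using that assms by (auto simp: poly_higher_pderiv_0 p_def coeff_monom_mult)
  then show ?thesis using root by (rule that)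
qed

lemma poly_higher_pderivs_bounded:
  fixes p :: "'a::real_normed_field poly"
  assumes "compact S"
  obtains B where "\<And>k u. k \<le> M \<Longrightarrow> u \<in> S \<Longrightarrow> norm (poly ((pderiv ^^ k) p) u) \<le> B"
proof -
  define h where "h u = (\<Sum>k\<le>M. norm (poly ((pderiv ^^ k) p) u))" for u
  have "compact (h ` S)"
    using assms unfolding h_def by (intro compact_continuous_image continuous_intros)
  then obtain B where "\<forall>x\<in>h ` S. norm x \<le> B"
    by (meson bounded_iff compact_imp_bounded)
  then have B: "h u \<le> B" if "u \<in> S" for u
    using that abs_le_D1 by auto
  show ?thesis
  proof (rule that)
    fix k u assume "k \<le> M" "u \<in> S"
    then have "norm (poly ((pderiv ^^ k) p) u) \<le> h u"
      unfolding h_def by (intro member_le_sum) auto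
    also have "\<dots> \<le> B" using B \<open>u \<in> S\<close> .
    finally show "norm (poly ((pderiv ^^ k) p) u) \<le> B" .
  qed
qed

lemma has_real_derivative_rescaled_higher_pderiv:
  fixes p :: "real poly"
  assumes "\<eta> \<noteq> 0"
  shows "((\<lambda>t. poly ((pderiv ^^ k) p) ((t - b) / \<eta>) / \<eta> ^ k) has_real_derivative
           poly ((pderiv ^^ Suc k) p) ((t - b) / \<eta>) / \<eta> ^ Suc k) (at t)"
proof -
  have "((\<lambda>t. (t - b) / \<eta>) has_real_derivative 1 / \<eta>) (at t)"
    using assms by (auto intro!: derivative_eq_intros)
  from DERIV_chain2[OF poly_DERIV this]
  have "((\<lambda>t. poly ((pderiv ^^ k) p) ((t - b) / \<eta>)) has_real_derivative
          poly ((pderiv ^^ Suc k) p) ((t - b) / \<eta>) * (1 / \<eta>)) (at t)"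
    by simp
  from DERIV_cdivide[OF this, of "\<eta> ^ k"] show ?thesis
    using assms by (simp add: field_simps)
qed

lemma abs_rescaled_higher_pderiv_le:
  fixes p :: "real poly"
  assumes "0 < \<eta>" "\<eta> \<le> 1" "k < m" "t \<in> {b - \<eta>..b}"
    and bound: "\<And>u. u \<in> {-1..0} \<Longrightarrow> \<bar>poly ((pderiv ^^ k) p) u\<bar> \<le> B"
  shows "\<bar>\<eta> ^ m * (poly ((pderiv ^^ k) p) ((t - b) / \<eta>) / \<eta> ^ k)\<bar> \<le> \<eta> * B"
proof -
  have "B \<ge> 0" using bound[of 0] by simp
  have "(t - b) / \<eta> \<in> {-1..0}"
    using assms(1,4) by (auto simp: field_simps)
  have "\<bar>\<eta> ^ m * (poly ((pderiv ^^ k) p) ((t - b) / \<eta>) / \<eta> ^ k)\<bar> =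
          \<eta> ^ (m - k) * \<bar>poly ((pderiv ^^ k) p) ((t - b) / \<eta>)\<bar>"
    using assms(1,3) by (simp add: abs_mult power_diff)
  also have "\<dots> \<le> \<eta> ^ (m - k) * B"
    using bound \<open>(t - b) / \<eta> \<in> {-1..0}\<close> assms(1) by (intro mult_left_mono) auto
  also have "\<dots> \<le> \<eta> ^ 1 * B"
    using assms(1-3) \<open>B \<ge> 0\<close> by (intro mult_right_mono power_decreasing) auto
  finally show ?thesis by simp
qed

lemma exists_bump_with_jet:
  fixes a b \<epsilon> :: real
  assumes "a < b" "m \<le> M" "\<epsilon> > 0"
  obtains \<phi> where "Cm_on M a b \<phi>"
    and "\<And>k. k \<le> M \<Longrightarrow> \<phi> k b = (if k = m then 1 else 0)"
    and "\<And>k. k \<le> M \<Longrightarrow> \<phi> k a = 0"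
    and "\<And>k t. k < m \<Longrightarrow> t \<in> {a..b} \<Longrightarrow> \<bar>\<phi> k t\<bar> < \<epsilon>"
proof -
  obtain p :: "real poly"
    where jet_0: "\<And>k. k \<le> M \<Longrightarrow> poly ((pderiv ^^ k) p) 0 = (if k = m then 1 else 0)"
      and jet_1: "\<And>k. k \<le> M \<Longrightarrow> poly ((pderiv ^^ k) p) (-1) = 0"
    using exists_poly_with_jets[OF \<open>m \<le> M\<close>] by blast
  obtain B where B: "\<And>k u. k \<le> M \<Longrightarrow> u \<in> {-1..0} \<Longrightarrow> \<bar>poly ((pderiv ^^ k) p) u\<bar> \<le> B"
    using poly_higher_pderivs_bounded[of "{-1..0::real}" M p] by auto
  have "B \<ge> 0" using B[of 0 0] by simp
  define \<eta> where "\<eta> = min (b - a) (min 1 (\<epsilon> / (B + 1)))"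
  have \<eta>: "0 < \<eta>" "\<eta> \<le> b - a" "\<eta> \<le> 1"
    using assms \<open>B \<ge> 0\<close> by (auto simp: \<eta>_def)
  have "\<eta> * B \<le> \<epsilon> / (B + 1) * B"
    using \<open>B \<ge> 0\<close> by (intro mult_right_mono) (auto simp: \<eta>_def)
  also have "\<dots> < \<epsilon>"
    using assms \<open>B \<ge> 0\<close> by (simp add: field_simps)
  finally have "\<eta> * B < \<epsilon>" .
  define P where "P k = (\<lambda>t. \<eta> ^ m * (poly ((pderiv ^^ k) p) ((t - b) / \<eta>) / \<eta> ^ k))" for k
  have "Cm_on M (b - \<eta>) b P"
  proof (rule Cm_on_of_has_vector_derivative_at)
    fix k t
    show "(P k has_vector_derivative P (Suc k) t) (at t)"
      unfolding P_def has_real_derivative_iff_has_vector_derivative[symmetric]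
      using \<eta> by (intro DERIV_cmult has_real_derivative_rescaled_higher_pderiv) simp
  qed
  moreover have "P k (b - \<eta>) = 0" if "k \<le> M" for k
    using that \<eta> jet_1 by (simp add: P_def)
  ultimately have "Cm_on M a b (\<lambda>k t. if t \<le> b - \<eta> then 0 else P k t)"
    using \<eta> by (intro Cm_on_glue Cm_on_zero) auto
  then show ?thesis
  proof (rule that)
    fix k assume "k \<le> M"
    then show "(if b \<le> b - \<eta> then 0 else P k b) = (if k = m then 1 else 0)"
      using \<eta> jet_0 by (simp add: P_def)
    show "(if a \<le> b - \<eta> then 0 else P k a) = 0"
      using \<eta> by simp
  next
    fix k t assume "k < m" "t \<in> {a..b}"
    show "\<bar>if t \<le> b - \<eta> then 0 else P k t\<bar> < \<epsilon>"
    proof (cases "t \<le> b - \<eta>")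
      case False
      then have "\<bar>P k t\<bar> \<le> \<eta> * B"
        unfolding P_def using \<eta> \<open>k < m\<close> \<open>t \<in> {a..b}\<close> B[of k] \<open>m \<le> M\<close>
        by (intro abs_rescaled_higher_pderiv_le) auto
      then show ?thesis using \<open>\<eta> * B < \<epsilon>\<close> False by simp
    qed (use assms in simp)
  qed
qed

lemma Cm_on_adjust_jet:
  fixes f :: "nat \<Rightarrow> real \<Rightarrow> 'a::real_normed_vector"
  assumes "a \<le> b" "Cm_on M a b f" "\<delta> > 0" and jet: "\<And>k. k \<le> s \<Longrightarrow> d k = f k b"
  obtains E where "Cm_on M a b E" "\<And>k. k \<le> M \<Longrightarrow> E k b = d k"
    and "\<And>k. k \<le> s \<Longrightarrow> E k a = f k a"
    and "\<And>k t. k \<le> s \<Longrightarrow> t \<in> {a..b} \<Longrightarrow> norm (E k t - f k t) < \<delta>"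
proof (cases "a = b")
  case True
  then show ?thesis
    using that[of "\<lambda>k t. d k"] jet \<open>\<delta> > 0\<close> by (simp add: Cm_on_def)
next
  case False
  with \<open>a \<le> b\<close> have "a < b" by simp
  define c where "c m = d m - f m b" for m
  define S where "S = (\<Sum>m\<in>{s<..M}. norm (c m))"
  define \<epsilon> where "\<epsilon> = \<delta> / (S + 1)"
  have "S \<ge> 0" unfolding S_def by (simp add: sum_nonneg)
  then have "\<epsilon> > 0" using \<open>\<delta> > 0\<close> by (simp add: \<epsilon>_def)
  have "\<exists>\<phi>. Cm_on M a b \<phi> \<and> (\<forall>k\<le>M. \<phi> k b = (if k = m then 1 else 0)) \<and>
          (\<forall>k\<le>M. \<phi> k a = 0) \<and> (\<forall>k<m. \<forall>t\<in>{a..b}. \<bar>\<phi> k t\<bar> < \<epsilon>)"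
    if "m \<in> {s<..M}" for m
    using exists_bump_with_jet[OF \<open>a < b\<close> _ \<open>\<epsilon> > 0\<close>, of m M] that by (metis greaterThanAtMost_iff)
  then obtain \<Phi> where \<Phi>: "\<And>m. m \<in> {s<..M} \<Longrightarrow> Cm_on M a b (\<Phi> m) \<and>
      (\<forall>k\<le>M. \<Phi> m k b = (if k = m then 1 else 0)) \<and> (\<forall>k\<le>M. \<Phi> m k a = 0) \<and>
      (\<forall>k<m. \<forall>t\<in>{a..b}. \<bar>\<Phi> m k t\<bar> < \<epsilon>)"
    by metis
  define E where "E k t = f k t + (\<Sum>m\<in>{s<..M}. \<Phi> m k t *\<^sub>R c m)" for k t
  show ?thesis
  proof (rule that)
    show "Cm_on M a b E"
      unfolding E_def using \<Phi> \<open>Cm_on M a b f\<close>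
      by (intro Cm_on_add Cm_on_sum Cm_on_scaleR_const) auto
  next
    fix k assume "k \<le> M"
    then have "(\<Sum>m\<in>{s<..M}. \<Phi> m k b *\<^sub>R c m) = (\<Sum>m\<in>{s<..M}. if m = k then c m else 0)"
      using \<Phi> by (intro sum.cong) auto
    then show "E k b = d k"
      using \<open>k \<le> M\<close> jet by (auto simp: E_def c_def)
  next
    fix k assume "k \<le> s"
    then show "E k a = f k a"
      using \<Phi> by (simp add: E_def)
  next
    fix k t assume "k \<le> s" "t \<in> {a..b}"
    have "norm (E k t - f k t) \<le> (\<Sum>m\<in>{s<..M}. \<bar>\<Phi> m k t\<bar> * norm (c m))"
      unfolding E_def by (simp add: norm_sum[THEN order_trans])
    also have "\<dots> \<le> (\<Sum>m\<in>{s<..M}. \<epsilon> * norm (c m))"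
      using \<Phi> \<open>k \<le> s\<close> \<open>t \<in> {a..b}\<close> by (intro sum_mono mult_right_mono) (auto intro: less_imp_le)
    also have "\<dots> = \<epsilon> * S" by (simp add: S_def sum_distrib_left)
    also have "\<dots> < \<delta>"
      using \<open>S \<ge> 0\<close> \<open>\<delta> > 0\<close> by (simp add: \<epsilon>_def field_simps)
    finally show "norm (E k t - f k t) < \<delta>" .
  qed
qed

lemma Cm_on_prepend_piece:
  fixes f g :: "nat \<Rightarrow> real \<Rightarrow> 'a::real_normed_vector"
  assumes "a \<le> b" "b \<le> c" "Cm_on M a b f" "Cm_on M b c g" "\<delta> > 0"
    and "\<And>k. k \<le> s \<Longrightarrow> g k b = f k b"
  obtains F where "Cm_on M a c F" "\<And>k. k \<le> s \<Longrightarrow> F k a = f k a"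
    and "\<And>k t. k \<le> s \<Longrightarrow> t \<in> {a..b} \<Longrightarrow> norm (F k t - f k t) < \<delta>"
    and "\<And>k t. k \<le> M \<Longrightarrow> t \<in> {b..c} \<Longrightarrow> F k t = g k t"
proof -
  obtain E where E: "Cm_on M a b E" and E_jet: "\<And>k. k \<le> M \<Longrightarrow> E k b = g k b"
    and E_start: "\<And>k. k \<le> s \<Longrightarrow> E k a = f k a"
    and E_approx: "\<And>k t. k \<le> s \<Longrightarrow> t \<in> {a..b} \<Longrightarrow> norm (E k t - f k t) < \<delta>"
    using Cm_on_adjust_jet[of a b M f \<delta> s "\<lambda>k. g k b"] assms by auto
  show ?thesis
  proof (rule that[of "\<lambda>k t. if t \<le> b then E k t else g k t"])
    show "Cm_on M a c (\<lambda>k t. if t \<le> b then E k t else g k t)"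
      using assms E E_jet by (intro Cm_on_glue) auto
  qed (use \<open>a \<le> b\<close> E_start E_approx E_jet in auto)
qed

lemma piecewise_approximation_with_matched_jets:
  fixes x :: "nat \<Rightarrow> real" and f :: "nat \<Rightarrow> nat \<Rightarrow> real \<Rightarrow> 'a::real_normed_vector"
  assumes "\<And>i. i \<le> n \<Longrightarrow> x i \<le> x (Suc i)"
    and "\<And>j. j \<in> {1..Suc n} \<Longrightarrow> Cinf_on (x (j - 1)) (x j) (f j)"
    and "\<And>i k. i \<in> {1..n} \<Longrightarrow> k < i + s \<Longrightarrow> f i k (x i) = f (Suc i) k (x i)"
    and "\<delta> > 0"
  shows "\<exists>F. Cm_on (n + s) (x 0) (x (Suc n)) F \<and> (\<forall>k\<le>s. F k (x 0) = f 1 k (x 0)) \<and>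
           (\<forall>j\<in>{1..Suc n}. \<forall>k<j + s. \<forall>t\<in>{x (j - 1)..x j}. norm (F k t - f j k t) < \<delta>)"
  using assms(1-3)
proof (induction n arbitrary: x f s)
  case 0
  have "Cm_on s (x 0) (x 1) (f 1)"
    using "0.prems"(2) by (simp add: Cinf_on_def)
  then show ?case
    using \<open>\<delta> > 0\<close> by auto
next
  case (Suc n)
  note mono = Suc.prems(1) and smooth = Suc.prems(2) and match = Suc.prems(3)
  have chain: "x i \<le> x j" if "i \<le> j" "j \<le> Suc (Suc n)" for i j
    by (rule lift_Suc_mono_le_ivl[of "{..Suc n}"]) (use mono that in auto)
  define M where "M = n + Suc s"
  have smooth': "Cinf_on ((x \<circ> Suc) (j - 1)) ((x \<circ> Suc) j) ((f \<circ> Suc) j)"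
    if "j \<in> {1..Suc n}" for j
    using smooth[of "Suc j"] that by (cases j) auto
  have match': "(f \<circ> Suc) i k ((x \<circ> Suc) i) = (f \<circ> Suc) (Suc i) k ((x \<circ> Suc) i)"
    if "i \<in> {1..n}" "k < i + Suc s" for i k
    using match[of "Suc i" k] that by simp
  obtain G where G: "Cm_on M (x 1) (x (Suc (Suc n))) G"
    and G_jet: "\<And>k. k \<le> Suc s \<Longrightarrow> G k (x 1) = f 2 k (x 1)"
    and G_approx: "\<And>j k t. j \<in> {1..Suc n} \<Longrightarrow> k < j + Suc s \<Longrightarrow> t \<in> {x j..x (Suc j)} \<Longrightarrow>
           norm (G k t - f (Suc j) k t) < \<delta>"
    using Suc.IH[of "x \<circ> Suc" "f \<circ> Suc" "Suc s", OF _ smooth' match'] mono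
    by (auto simp: M_def numeral_2_eq_2)
  have f1: "Cm_on M (x 0) (x 1) (f 1)"
    using smooth[of 1] by (simp add: Cinf_on_def)
  have jet1: "G k (x 1) = f 1 k (x 1)" if "k \<le> s" for k
    using G_jet[of k] match[of 1 k] that by (simp add: numeral_2_eq_2)
  obtain F where F: "Cm_on M (x 0) (x (Suc (Suc n))) F"
    and F_start: "\<And>k. k \<le> s \<Longrightarrow> F k (x 0) = f 1 k (x 0)"
    and F_approx: "\<And>k t. k \<le> s \<Longrightarrow> t \<in> {x 0..x 1} \<Longrightarrow> norm (F k t - f 1 k t) < \<delta>"
    and F_eq: "\<And>k t. k \<le> M \<Longrightarrow> t \<in> {x 1..x (Suc (Suc n))} \<Longrightarrow> F k t = G k t"
    using Cm_on_prepend_piece[OF _ _ f1 G \<open>\<delta> > 0\<close> jet1] chain by auto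
  have "norm (F k t - f j k t) < \<delta>"
    if "j \<in> {1..Suc (Suc n)}" "k < j + s" "t \<in> {x (j - 1)..x j}" for j k t
  proof (cases "j = 1")
    case True
    then show ?thesis using that F_approx by simp
  next
    case False
    with that(1) obtain i where j: "j = Suc i" and i: "i \<in> {1..Suc n}" by (cases j) auto
    with that(3) chain[of 1 i] chain[of "Suc i" "Suc (Suc n)"] have "t \<in> {x 1..x (Suc (Suc n))}"
      by auto
    then have "F k t = G k t"
      using F_eq[of k] that(2) i j by (simp add: M_def)
    then show ?thesis
      using G_approx[of i k t] that i j by simp
  qed
  with F F_start show ?case
    unfolding M_def by auto
qed

theorem mainTheorem12:
  fixes n :: nat and x :: "nat \<Rightarrow> real"
    and f :: "nat \<Rightarrow> nat \<Rightarrow> real \<Rightarrow> 'a::real_normed_field"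
  assumes mono: "\<forall>i<n. x i \<le> x (Suc i)"
    and smooth: "\<forall>j\<in>{1..n}. Cinf_on (x (j - 1)) (x j) (f j)"
    and match: "\<forall>i\<in>{1..n - 1}. \<forall>k<i. f i k (x i) = f (Suc i) k (x i)"
    and delta: "\<delta> > 0"
  shows "\<exists>F :: nat \<Rightarrow> real \<Rightarrow> 'a. Cm_on (n - 1) (x 0) (x n) F \<and>
           (\<forall>k<n. \<forall>j\<in>{k+1..n}. \<forall>t\<in>{x (j - 1)..x j}. norm (F k t - f j k t) < \<delta>)"
proof (cases n)
  case 0
  then show ?thesis by (simp add: Cm_on_def)
next
  case (Suc m)
  then obtain F where "Cm_on m (x 0) (x n) F"
    and "\<forall>j\<in>{1..n}. \<forall>k<j. \<forall>t\<in>{x (j - 1)..x j}. norm (F k t - f j k t) < \<delta>"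
    using piecewise_approximation_with_matched_jets[of m x f 0 \<delta>] mono smooth match delta
    by auto
  then show ?thesis
    using Suc by auto
qed

end
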